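(* Let $n\geq 3$ be an integer and let $G$ be a finite group with $n$ elements and identity $1$. Let $X_G$ be the Cayley graph of $G\times G$ with respect to the subset $\{(s,1),(1,s),(s,s): s\in G,\ s\neq 1\}$. Then: (i) $X_G$ is strongly regular with parameters $(n^2,\,3n-3,\,n,\,6)$, i.e. it has $n^2$ vertices, is regular of degree $3n-3$, any two adjacent vertices have exactly $n$ common neighbours, and any two distinct non-adjacent vertices have exactly $6$ common neighbours; (ii) the number of elements of order $2$ in $G$ is a graph invariant of $X_G$: if $G$ and $H$ are groups with $n$ elements and $X_G$ is isomorphic to $X_H$ as graphs, then $G$ and $H$ have the same number of elements of order $2$.
   Context: For a finite group $\Gamma$ and a subset $S\subseteq\Gamma$ that does not contain the identity, is closed under inverses, and generates $\Gamma$, the Cayley graph of $\Gamma$ with respect to $S$ has vertex set $\Gamma$ and an edge between $g$ and $h$ whenever $g^{-1}h\in S$. A regular graph is strongly regular if it is not complete and there are non-negative integers $a,c$ such that any two adjacent vertices have exactly $a$ common neighbours and any two distinct non-adjacent vertices have exactly $c$ common neighbours. *)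

theory Defs
  imports "HOL-Algebra.Multiplicative_Group"
begin

definition cayley_adj :: "('a, 'm) monoid_scheme \<Rightarrow> 'a set \<Rightarrow> 'a \<Rightarrow> 'a \<Rightarrow> bool" where
  "cayley_adj Gm S g h \<longleftrightarrow>
     g \<in> carrier Gm \<and> h \<in> carrier Gm \<and> inv\<^bsub>Gm\<^esub> g \<otimes>\<^bsub>Gm\<^esub> h \<in> S"

definition XG_conn :: "('a, 'm) monoid_scheme \<Rightarrow> ('a \<times> 'a) set" where
  "XG_conn G = {(s, \<one>\<^bsub>G\<^esub>) | s. s \<in> carrier G \<and> s \<noteq> \<one>\<^bsub>G\<^esub>}
             \<union> {(\<one>\<^bsub>G\<^esub>, s) | s. s \<in> carrier G \<and> s \<noteq> \<one>\<^bsub>G\<^esub>}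
             \<union> {(s, s) | s. s \<in> carrier G \<and> s \<noteq> \<one>\<^bsub>G\<^esub>}"

definition XG_vert :: "('a, 'm) monoid_scheme \<Rightarrow> ('a \<times> 'a) set" where
  "XG_vert G = carrier (G \<times>\<times> G)"

definition XG_adj :: "('a, 'm) monoid_scheme \<Rightarrow> 'a \<times> 'a \<Rightarrow> 'a \<times> 'a \<Rightarrow> bool" where
  "XG_adj G = cayley_adj (G \<times>\<times> G) (XG_conn G)"

definition nbhd :: "'v set \<Rightarrow> ('v \<Rightarrow> 'v \<Rightarrow> bool) \<Rightarrow> 'v \<Rightarrow> 'v set" where
  "nbhd V E x = {y \<in> V. E x y}"

definition strongly_regular ::
    "'v set \<Rightarrow> ('v \<Rightarrow> 'v \<Rightarrow> bool) \<Rightarrow> nat \<Rightarrow> nat \<Rightarrow> nat \<Rightarrow> nat \<Rightarrow> bool" where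
  "strongly_regular V E v k a c \<longleftrightarrow>
     finite V \<and> card V = v \<and>
     (\<forall>x\<in>V. card (nbhd V E x) = k) \<and>
     (\<exists>x\<in>V. \<exists>y\<in>V. x \<noteq> y \<and> \<not> E x y) \<and>
     (\<forall>x\<in>V. \<forall>y\<in>V. E x y \<longrightarrow> card (nbhd V E x \<inter> nbhd V E y) = a) \<and>
     (\<forall>x\<in>V. \<forall>y\<in>V. x \<noteq> y \<and> \<not> E x y \<longrightarrow> card (nbhd V E x \<inter> nbhd V E y) = c)"

definition graph_iso :: "'v set \<Rightarrow> ('v \<Rightarrow> 'v \<Rightarrow> bool) \<Rightarrow> 'w set \<Rightarrow> ('w \<Rightarrow> 'w \<Rightarrow> bool) \<Rightarrow> bool" where
  "graph_iso V E W F \<longleftrightarrow>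
     (\<exists>f. bij_betw f V W \<and> (\<forall>x\<in>V. \<forall>y\<in>V. E x y \<longleftrightarrow> F (f x) (f y)))"

definition num_inv2 :: "('a, 'm) monoid_scheme \<Rightarrow> nat" where
  "num_inv2 G = card {x \<in> carrier G. group.ord G x = 2}"

end

theory Submission
  imports Defs
begin

text \<open>\<open>X\<^sub>G\<close> is the Latin square graph of the Cayley table of \<open>G\<close>: the vertex \<open>(x, y)\<close> is the
  cell with coordinates \<open>x\<close>, \<open>y\<close>, \<open>y x\<inverse>\<close>, and two cells are adjacent iff they agree in one
  coordinate. Since any two coordinates determine a cell, such a graph is strongly regular with
  parameters \<open>(n\<^sup>2, 3n - 3, n, 6)\<close> for every Latin square of order \<open>n \<ge> 3\<close>.

  For (ii) count ordered 4-cliques \<open>(a, b, c, d)\<close>. If \<open>a\<close>, \<open>b\<close> share a line, their common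
  neighbours are the \<open>n - 2\<close> other cells of that line, which form a clique, and two further cells
  \<open>u\<close>, \<open>u'\<close> adjacent to none of them; \<open>u\<close> and \<open>u'\<close> are adjacent iff \<open>a, u, b, u'\<close> form a
  \<open>2 \<times> 2\<close> subsquare. In the Cayley table, \<open>(x, y)\<close> and \<open>(x, y t)\<close> (and likewise the other two
  kinds of neighbours) span such a subsquare iff \<open>t\<^sup>2 = 1\<close>. Hence the number of ordered 4-cliques is
  \<open>n\<^sup>2 ((3n - 3)(n - 2)(n - 3) + 6 m)\<close>, where \<open>m\<close> is the number of elements of order 2.\<close>

lemma ex_less_3: "(\<exists>i<(3::nat). P i) \<longleftrightarrow> P 0 \<or> P 1 \<or> P 2"
  by (auto simp: less_Suc_eq numeral_3_eq_3 numeral_2_eq_2)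

lemma less_3_cases: "i < (3::nat) \<Longrightarrow> i = 0 \<or> i = 1 \<or> i = 2"
  by auto

lemma card_off_diagonal:
  assumes "finite A"
  shows "card {(c, d). c \<in> A \<and> d \<in> A \<and> c \<noteq> d} = card A * (card A - 1)"
proof -
  have "{(c, d). c \<in> A \<and> d \<in> A \<and> c \<noteq> d} = A \<times> A - (\<lambda>x. (x, x)) ` A"
    by auto
  moreover have "card ((\<lambda>x. (x, x)) ` A) = card A"
    by (rule card_image) (auto simp: inj_on_def)
  moreover have "(\<lambda>x. (x, x)) ` A \<subseteq> A \<times> A"
    by auto
  ultimately show ?thesis
    using assms by (simp add: card_Diff_subset card_cartesian_product diff_mult_distrib2)
qed

lemma card_image_Un3:
  assumes "finite A" "inj_on f A" "inj_on g A" "inj_on h A"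
    "f ` A \<inter> g ` A = {}" "f ` A \<inter> h ` A = {}" "g ` A \<inter> h ` A = {}"
  shows "card (f ` A \<union> g ` A \<union> h ` A) = 3 * card A"
proof -
  have "card (f ` A \<union> g ` A \<union> h ` A) = card (f ` A) + card (g ` A) + card (h ` A)"
    using assms by (simp add: card_Un_disjoint Int_Un_distrib2)
  then show ?thesis
    using assms by (simp add: card_image)
qed

definition edges_within :: "'v set \<Rightarrow> ('v \<Rightarrow> 'v \<Rightarrow> bool) \<Rightarrow> ('v \<times> 'v) set" where
  "edges_within S E = {(c, d). c \<in> S \<and> d \<in> S \<and> E c d}"

text \<open>For an irreflexive symmetric \<open>E\<close> this is the number of ordered 4-cliques.\<close>
definition ordered_K4_count :: "'v set \<Rightarrow> ('v \<Rightarrow> 'v \<Rightarrow> bool) \<Rightarrow> nat" where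
  "ordered_K4_count V E =
     (\<Sum>a\<in>V. \<Sum>b\<in>nbhd V E a. card (edges_within (nbhd V E a \<inter> nbhd V E b) E))"

lemma nbhd_graph_iso_image:
  assumes "bij_betw f V W" and "\<forall>x\<in>V. \<forall>y\<in>V. E x y \<longleftrightarrow> F (f x) (f y)" and "a \<in> V"
  shows "nbhd W F (f a) = f ` nbhd V E a"
  using assms unfolding nbhd_def bij_betw_def by auto

lemma card_edges_within_image:
  assumes "inj_on f V" and "\<forall>x\<in>V. \<forall>y\<in>V. E x y \<longleftrightarrow> F (f x) (f y)" and "S \<subseteq> V"
  shows "card (edges_within (f ` S) F) = card (edges_within S E)"
proof -
  have "edges_within (f ` S) F = map_prod f f ` edges_within S E"
    using assms(2,3) unfolding edges_within_def by auto
  moreover have "inj_on (map_prod f f) (edges_within S E)"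
    using assms(3) by (intro inj_on_subset[OF map_prod_inj_on[OF assms(1) assms(1)]])
      (auto simp: edges_within_def)
  ultimately show ?thesis
    by (simp add: card_image)
qed

lemma ordered_K4_count_graph_iso:
  assumes "graph_iso V E W F"
  shows "ordered_K4_count V E = ordered_K4_count W F"
proof -
  obtain f where bij: "bij_betw f V W" and hom: "\<forall>x\<in>V. \<forall>y\<in>V. E x y \<longleftrightarrow> F (f x) (f y)"
    using assms unfolding graph_iso_def by blast
  have inj: "inj_on f V"
    using bij by (rule bij_betw_imp_inj_on)
  have nbhd_sub: "nbhd V E a \<subseteq> V" for a
    by (auto simp: nbhd_def)
  note nbhd_f = nbhd_graph_iso_image[OF bij hom]
  have "ordered_K4_count W F =
      (\<Sum>a\<in>V. \<Sum>b\<in>nbhd W F (f a). card (edges_within (nbhd W F (f a) \<inter> nbhd W F b) F))"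
    unfolding ordered_K4_count_def by (rule sum.reindex_bij_betw[OF bij, symmetric])
  also have "\<dots> = (\<Sum>a\<in>V. \<Sum>b\<in>nbhd V E a.
      card (edges_within (f ` (nbhd V E a \<inter> nbhd V E b)) F))"
  proof (rule sum.cong[OF refl])
    fix a assume a: "a \<in> V"
    have "bij_betw f (nbhd V E a) (nbhd W F (f a))"
      unfolding nbhd_f[OF a] using inj_on_subset[OF inj nbhd_sub] by (simp add: bij_betw_def)
    moreover have "nbhd W F (f a) \<inter> nbhd W F (f b) = f ` (nbhd V E a \<inter> nbhd V E b)"
      if "b \<in> nbhd V E a" for b
    proof -
      have "b \<in> V"
        using that nbhd_sub by blast
      then show ?thesis
        using a by (simp add: nbhd_f inj_on_image_Int[OF inj nbhd_sub nbhd_sub])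
    qed
    ultimately show "(\<Sum>b\<in>nbhd W F (f a). card (edges_within (nbhd W F (f a) \<inter> nbhd W F b) F)) =
        (\<Sum>b\<in>nbhd V E a. card (edges_within (f ` (nbhd V E a \<inter> nbhd V E b)) F))"
      by (simp add: sum.reindex_bij_betw[symmetric])
  qed
  also have "\<dots> = ordered_K4_count V E"
    unfolding ordered_K4_count_def
    by (intro sum.cong refl card_edges_within_image[OF inj hom]) (use nbhd_sub in blast)
  finally show ?thesis ..
qed

text \<open>A Latin square of order \<open>card C\<close>: the cell \<open>v \<in> V\<close> has row \<open>p 0 v\<close>, column \<open>p 1 v\<close> and
  symbol \<open>p 2 v\<close>, and any two of the three coordinates determine the cell.\<close>
locale latin_square =
  fixes V :: "'v set" and C :: "'c set" and p :: "nat \<Rightarrow> 'v \<Rightarrow> 'c"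
  assumes finite_C: "finite C"
    and p_in: "v \<in> V \<Longrightarrow> i < 3 \<Longrightarrow> p i v \<in> C"
    and coords_inj: "v \<in> V \<Longrightarrow> w \<in> V \<Longrightarrow> i < 3 \<Longrightarrow> j < 3 \<Longrightarrow> i \<noteq> j
      \<Longrightarrow> p i v = p i w \<Longrightarrow> p j v = p j w \<Longrightarrow> v = w"
    and coords_surj: "a \<in> C \<Longrightarrow> b \<in> C \<Longrightarrow> i < 3 \<Longrightarrow> j < 3 \<Longrightarrow> i \<noteq> j
      \<Longrightarrow> \<exists>v\<in>V. p i v = a \<and> p j v = b"
begin

definition adj :: "'v \<Rightarrow> 'v \<Rightarrow> bool" where
  "adj v w \<longleftrightarrow> v \<in> V \<and> w \<in> V \<and> v \<noteq> w \<and> (\<exists>i<3. p i v = p i w)"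

definition line :: "nat \<Rightarrow> 'c \<Rightarrow> 'v set" where
  "line k c = {v \<in> V. p k v = c}"

definition cell :: "nat \<Rightarrow> nat \<Rightarrow> 'c \<Rightarrow> 'c \<Rightarrow> 'v" where
  "cell i j a b = (THE v. v \<in> V \<and> p i v = a \<and> p j v = b)"

text \<open>The cells \<open>a\<close>, \<open>b\<close> sharing coordinate \<open>k\<close> and the two cells completing them in the other
  coordinates \<open>i\<close>, \<open>j\<close> form a \<open>2 \<times> 2\<close> subsquare (an intercalate).\<close>
definition spans_intercalate :: "'v \<Rightarrow> 'v \<Rightarrow> bool" where
  "spans_intercalate a b \<longleftrightarrow> (\<exists>k i j. k < 3 \<and> i < 3 \<and> j < 3 \<and> i \<noteq> j \<and> i \<noteq> k \<and> j \<noteq> k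
     \<and> p k a = p k b \<and> p k (cell i j (p i a) (p j b)) = p k (cell j i (p j a) (p i b)))"

abbreviation N :: "'v \<Rightarrow> 'v set" where
  "N \<equiv> nbhd V adj"

abbreviation n :: nat where
  "n \<equiv> card C"

lemma adj_commute: "adj v w \<longleftrightarrow> adj w v"
  unfolding adj_def by auto

lemma not_adj_self: "\<not> adj v v"
  unfolding adj_def by simp

lemma adjE:
  assumes "adj v w"
  obtains k where "k < 3" "p k v = p k w" "v \<in> V" "w \<in> V" "v \<noteq> w"
  using assms unfolding adj_def by auto

lemma cell_spec:
  assumes "a \<in> C" "b \<in> C" "i < 3" "j < 3" "i \<noteq> j"
  shows "cell i j a b \<in> V" "p i (cell i j a b) = a" "p j (cell i j a b) = b"
proof -
  obtain v where v: "v \<in> V" "p i v = a" "p j v = b"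
    using coords_surj[OF assms] by blast
  have "cell i j a b = v"
    unfolding cell_def
  proof (rule the_equality)
    show "v \<in> V \<and> p i v = a \<and> p j v = b"
      using v by simp
    show "w = v" if "w \<in> V \<and> p i w = a \<and> p j w = b" for w
      using that v assms(3-5) coords_inj[of w v i j] by simp
  qed
  with v show "cell i j a b \<in> V" "p i (cell i j a b) = a" "p j (cell i j a b) = b"
    by simp_all
qed

lemma cell_eqI:
  assumes "v \<in> V" "i < 3" "j < 3" "i \<noteq> j" "p i v = a" "p j v = b"
  shows "cell i j a b = v"
proof -
  have "a \<in> C" "b \<in> C"
    using assms p_in by auto
  then show ?thesis
    using assms cell_spec[of a b i j] coords_inj[of "cell i j a b" v i j] by simp
qed

lemma bij_betw_coord_pair:
  assumes "i < 3" "j < 3" "i \<noteq> j"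
  shows "bij_betw (\<lambda>v. (p i v, p j v)) V (C \<times> C)"
proof -
  have "inj_on (\<lambda>v. (p i v, p j v)) V"
    using assms coords_inj[of _ _ i j] by (auto intro: inj_onI)
  moreover have "(\<lambda>v. (p i v, p j v)) ` V = C \<times> C"
    using assms p_in coords_surj[of _ _ i j] by fastforce
  ultimately show ?thesis
    by (simp add: bij_betw_def)
qed

lemma finite_V: "finite V"
  using bij_betw_finite[OF bij_betw_coord_pair[of 0 1]] finite_C by simp

lemma card_V: "card V = n ^ 2"
  using bij_betw_same_card[OF bij_betw_coord_pair[of 0 1]]
  by (simp add: card_cartesian_product power2_eq_square)

lemma card_line:
  assumes "k < 3" "c \<in> C"
  shows "card (line k c) = n"
proof -
  define j :: nat where "j = (if k = 0 then 1 else 0)"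
  have j: "j < 3" "j \<noteq> k"
    by (auto simp: j_def)
  have "inj_on (p j) (line k c)"
    using assms j coords_inj[of _ _ k j] by (auto intro: inj_onI simp: line_def)
  moreover have "p j ` line k c = C"
    using assms j p_in coords_surj[of c _ k j] by (fastforce simp: line_def)
  ultimately have "bij_betw (p j) (line k c) C"
    by (simp add: bij_betw_def)
  then show ?thesis
    by (rule bij_betw_same_card)
qed

lemma finite_line: "finite (line k c)"
  using finite_V unfolding line_def by simp

lemma nbhd_eq_lines:
  assumes "v \<in> V"
  shows "N v = (line 0 (p 0 v) - {v}) \<union> (line 1 (p 1 v) - {v}) \<union> (line 2 (p 2 v) - {v})"
  using assms unfolding nbhd_def adj_def line_def ex_less_3 by auto

lemma card_nbhd:
  assumes v: "v \<in> V"
  shows "card (N v) = 3 * n - 3"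
proof -
  let ?L = "\<lambda>k. line k (p k v) - {v}"
  have card_L: "card (?L k) = n - 1" if "k < 3" for k
    using card_line[OF that p_in[OF v that]] v that by (simp add: line_def)
  have "?L 0 \<inter> ?L 1 = {}" "(?L 0 \<union> ?L 1) \<inter> ?L 2 = {}"
    using v coords_inj[of _ v 0 1] coords_inj[of _ v 0 2] coords_inj[of _ v 1 2]
    unfolding line_def by auto
  then have "card (N v) = card (?L 0) + card (?L 1) + card (?L 2)"
    unfolding nbhd_eq_lines[OF v] by (simp add: card_Un_disjoint finite_line)
  then show ?thesis
    using card_L[of 0] card_L[of 1] card_L[of 2] by linarith
qed

lemma ex_non_adj:
  assumes "n \<ge> 3"
  shows "\<exists>v\<in>V. \<exists>w\<in>V. v \<noteq> w \<and> \<not> adj v w"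
proof -
  obtain c where c: "c \<in> C"
    using assms by (metis all_not_in_conv card.empty not_numeral_le_zero)
  define v where "v = cell 0 1 c c"
  have v: "v \<in> V"
    unfolding v_def using cell_spec[OF c c] by simp
  have "card (C - {p 0 v}) \<ge> 2"
    using assms p_in[OF v, of 0] finite_C by (simp add: card_Diff_singleton)
  then obtain a where a: "a \<in> C" "a \<noteq> p 0 v"
    by (metis DiffE all_not_in_conv card.empty insertCI not_numeral_le_zero)
  define w1 where "w1 = cell 0 1 a (p 1 v)"
  define w2 where "w2 = cell 0 2 a (p 2 v)"
  have "card {w1, w2} \<le> 2"
    by (simp add: card_insert_le_m1)
  then have "\<not> line 0 a \<subseteq> {w1, w2}"
    using card_mono[of "{w1, w2}" "line 0 a"] card_line[of 0 a] a assms by auto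
  then obtain w where w: "w \<in> V" "p 0 w = a" "w \<noteq> w1" "w \<noteq> w2"
    unfolding line_def by auto
  have "p 1 w \<noteq> p 1 v"
    using w cell_eqI[of w 0 1 a "p 1 v"] unfolding w1_def by auto
  moreover have "p 2 w \<noteq> p 2 v"
    using w cell_eqI[of w 0 2 a "p 2 v"] unfolding w2_def by auto
  ultimately have "\<not> adj v w"
    using w a unfolding adj_def ex_less_3 by auto
  moreover have "v \<noteq> w"
    using w a by auto
  ultimately show ?thesis
    using v w by blast
qed

lemma common_nbhd_non_adj:
  assumes v: "v \<in> V" and w: "w \<in> V" and "v \<noteq> w" "\<not> adj v w"
  shows "N v \<inter> N w = (\<lambda>(i, j). cell i j (p i v) (p j w)) ` {(i, j). i < 3 \<and> j < 3 \<and> i \<noteq> j}"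
    (is "_ = ?g ` ?P")
proof
  have ne: "p i v \<noteq> p i w" if "i < 3" for i
    using assms that unfolding adj_def by auto
  show "N v \<inter> N w \<subseteq> ?g ` ?P"
  proof
    fix c assume "c \<in> N v \<inter> N w"
    then have "adj v c" "adj w c"
      by (auto simp: nbhd_def)
    then obtain i j where ij: "i < 3" "j < 3" "p i c = p i v" "p j c = p j w" and c: "c \<in> V"
      by (elim adjE) auto
    moreover have "i \<noteq> j"
      using ij ne by metis
    ultimately have "c = ?g (i, j)"
      using cell_eqI[OF c, of i j] by simp
    then show "c \<in> ?g ` ?P"
      using ij \<open>i \<noteq> j\<close> by blast
  qed
  show "?g ` ?P \<subseteq> N v \<inter> N w"
  proof safe
    fix i j :: nat assume ij: "i < 3" "j < 3" "i \<noteq> j"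
    let ?c = "cell i j (p i v) (p j w)"
    have c: "?c \<in> V" "p i ?c = p i v" "p j ?c = p j w"
      using cell_spec[OF p_in[OF v ij(1)] p_in[OF w ij(2)] ij] by simp_all
    have "?c \<noteq> v" "?c \<noteq> w"
      using c ne ij by metis+
    then show "?c \<in> N v" "?c \<in> N w"
      using v w c ij unfolding nbhd_def adj_def by auto
  qed
qed

lemma card_common_nbhd_non_adj:
  assumes v: "v \<in> V" and w: "w \<in> V" and "v \<noteq> w" "\<not> adj v w"
  shows "card (N v \<inter> N w) = 6"
proof -
  let ?g = "\<lambda>(i, j). cell i j (p i v) (p j w)"
  let ?P = "{(i, j). i < (3::nat) \<and> j < 3 \<and> i \<noteq> j}"
  have ne: "p i v \<noteq> p i w" if "i < 3" for i
    using assms that unfolding adj_def by auto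
  have "inj_on ?g ?P"
  proof (rule inj_onI, clarsimp)
    fix i j i' j' :: nat
    assume ij: "i < 3" "j < 3" "i \<noteq> j" "i' < 3" "j' < 3" "i' \<noteq> j'"
      and eq: "cell i j (p i v) (p j w) = cell i' j' (p i' v) (p j' w)"
    let ?c = "cell i j (p i v) (p j w)"
    have c: "?c \<in> V" "p i ?c = p i v" "p j ?c = p j w" "p i' ?c = p i' v" "p j' ?c = p j' w"
      using cell_spec[OF p_in[OF v ij(1)] p_in[OF w ij(2)] ij(1-3)]
        cell_spec[OF p_in[OF v ij(4)] p_in[OF w ij(5)] ij(4-6)] eq by simp_all
    have "i = i'"
      using coords_inj[OF c(1) v ij(1,4) _ c(2,4)] c(3) ne ij(2) by metis
    moreover have "j = j'"
      using coords_inj[OF c(1) w ij(2,5) _ c(3,5)] c(2) ne ij(1) by metis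
    ultimately show "i = i' \<and> j = j'" ..
  qed
  moreover have "?P = {(0, 1), (0, 2), (1, 0), (1, 2), (2, 0), (2, 1)}"
    by (auto simp: less_Suc_eq numeral_3_eq_3 numeral_2_eq_2)
  ultimately show ?thesis
    unfolding common_nbhd_non_adj[OF assms] by (simp add: card_image)
qed

end

locale latin_square_adj_pair = latin_square V C p
    for V :: "'v set" and C :: "'c set" and p :: "nat \<Rightarrow> 'v \<Rightarrow> 'c" +
  fixes a b :: 'v and i j k :: nat
  assumes adj_ab: "adj a b" and same_k: "p k a = p k b"
    and indices: "i < 3" "j < 3" "k < 3" "i \<noteq> j" "i \<noteq> k" "j \<noteq> k"
begin

definition corner :: 'v where
  "corner = cell i j (p i a) (p j b)"

definition corner' :: 'v where
  "corner' = cell j i (p j a) (p i b)"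

definition rest :: "'v set" where
  "rest = line k (p k a) - {a, b}"

lemma index_cases: "m < 3 \<Longrightarrow> m = i \<or> m = j \<or> m = k"
  using indices by arith

lemma a_in: "a \<in> V" and b_in: "b \<in> V" and a_neq_b: "a \<noteq> b"
  using adj_ab by (auto elim: adjE)

lemma coord_neq: "m < 3 \<Longrightarrow> m \<noteq> k \<Longrightarrow> p m a \<noteq> p m b"
  using coords_inj[OF a_in b_in, of m k] indices same_k a_neq_b by auto

lemma corner_spec: "corner \<in> V" "p i corner = p i a" "p j corner = p j b"
  unfolding corner_def using cell_spec p_in a_in b_in indices by auto

lemma corner'_spec: "corner' \<in> V" "p j corner' = p j a" "p i corner' = p i b"
  unfolding corner'_def using cell_spec p_in a_in b_in indices by auto

lemma corner_k: "p k corner \<noteq> p k a"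
  using coords_inj[OF corner_spec(1) a_in, of i k] corner_spec coord_neq[of j] indices by auto

lemma corner'_k: "p k corner' \<noteq> p k a"
  using coords_inj[OF corner'_spec(1) a_in, of j k] corner'_spec coord_neq[of i] indices by auto

lemma corner_neq_corner': "corner \<noteq> corner'"
  using corner_spec(2) corner'_spec(3) coord_neq[of i] indices by auto

lemma corners_notin_rest: "corner \<notin> rest" "corner' \<notin> rest"
  using corner_k corner'_k by (auto simp: rest_def line_def)

lemma common_nbhd_adj_pair: "N a \<inter> N b = rest \<union> {corner, corner'}"
proof
  show "N a \<inter> N b \<subseteq> rest \<union> {corner, corner'}"
  proof
    fix c assume "c \<in> N a \<inter> N b"
    then have "adj a c" "adj b c"
      by (auto simp: nbhd_def)
    then obtain m m' where c: "c \<in> V" "c \<noteq> a" "c \<noteq> b"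
      and m: "m < 3" "p m c = p m a" and m': "m' < 3" "p m' c = p m' b"
      by (elim adjE) auto
    consider "m = k \<or> m' = k" | "m = i" "m' = j" | "m = j" "m' = i"
      using index_cases[OF m(1)] index_cases[OF m'(1)] m m' coord_neq by metis
    then show "c \<in> rest \<union> {corner, corner'}"
    proof cases
      case 1
      then show ?thesis
        using c m m' same_k by (auto simp: rest_def line_def)
    next
      case 2
      then show ?thesis
        using cell_eqI[OF c(1), of i j] m m' indices by (simp add: corner_def)
    next
      case 3
      then show ?thesis
        using cell_eqI[OF c(1), of j i] m m' indices by (simp add: corner'_def)
    qed
  qed
  have "adj a c \<and> adj b c" if "c \<in> rest" for c
    using that a_in b_in indices same_k by (auto simp: rest_def line_def adj_def)
  moreover have "adj a corner" "adj b corner" "adj a corner'" "adj b corner'"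
    using corner_spec corner'_spec corner_k corner'_k same_k a_in b_in indices
    unfolding adj_def by (metis (lifting))+
  ultimately show "rest \<union> {corner, corner'} \<subseteq> N a \<inter> N b"
    using corner_spec(1) corner'_spec(1) by (auto simp: nbhd_def adj_def rest_def line_def)
qed

lemma not_adj_rest_corners:
  assumes "c \<in> rest"
  shows "\<not> adj c corner" "\<not> adj c corner'"
proof -
  have c: "c \<in> V" "p k c = p k a" "c \<noteq> a" "c \<noteq> b"
    using assms by (auto simp: rest_def line_def)
  have a: "p m c \<noteq> p m a" and b: "p m c \<noteq> p m b" if "m < 3" "m \<noteq> k" for m
    using that c coords_inj[OF c(1) a_in, of m k] coords_inj[OF c(1) b_in, of m k] same_k indices
    by auto
  show "\<not> adj c corner"
  proof
    assume "adj c corner"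
    then obtain m where "m < 3" "p m c = p m corner"
      by (elim adjE)
    then show False
      using index_cases a b corner_spec corner_k c(2) indices by metis
  qed
  show "\<not> adj c corner'"
  proof
    assume "adj c corner'"
    then obtain m where "m < 3" "p m c = p m corner'"
      by (elim adjE)
    then show False
      using index_cases a b corner'_spec corner'_k c(2) indices by metis
  qed
qed

lemma adj_rest: "c \<in> rest \<Longrightarrow> d \<in> rest \<Longrightarrow> adj c d \<longleftrightarrow> c \<noteq> d"
  using indices by (auto simp: rest_def line_def adj_def)

lemma card_rest: "card rest = n - 2"
proof -
  have "{a, b} \<subseteq> line k (p k a)"
    using a_in b_in same_k by (auto simp: line_def)
  then show ?thesis
    using card_line[OF indices(3) p_in[OF a_in indices(3)]] a_neq_b
    by (simp add: rest_def card_Diff_subset)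
qed

lemma adj_corners_iff: "adj corner corner' \<longleftrightarrow> p k corner = p k corner'"
proof
  assume "adj corner corner'"
  then obtain m where "m < 3" "p m corner = p m corner'"
    by (elim adjE)
  then show "p k corner = p k corner'"
    using index_cases corner_spec corner'_spec coord_neq indices by metis
next
  assume "p k corner = p k corner'"
  then show "adj corner corner'"
    using corner_spec(1) corner'_spec(1) corner_neq_corner' indices by (auto simp: adj_def)
qed

lemma spans_intercalate_iff: "spans_intercalate a b \<longleftrightarrow> p k corner = p k corner'"
proof
  assume "spans_intercalate a b"
  then obtain k' i' j' where idx: "k' < 3" "i' < 3" "j' < 3" "i' \<noteq> j'" "i' \<noteq> k'" "j' \<noteq> k'"
    and "p k' a = p k' b"
    and eq: "p k' (cell i' j' (p i' a) (p j' b)) = p k' (cell j' i' (p j' a) (p i' b))"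
    unfolding spans_intercalate_def by blast
  then have "k' = k"
    using coord_neq by blast
  then have "i' = i \<and> j' = j \<or> i' = j \<and> j' = i"
    using index_cases idx by metis
  then show "p k corner = p k corner'"
    using eq \<open>k' = k\<close> unfolding corner_def corner'_def by auto
next
  assume "p k corner = p k corner'"
  then show "spans_intercalate a b"
    unfolding spans_intercalate_def corner_def corner'_def using indices same_k by blast
qed

lemma spans_intercalate_iff_completions:
  assumes "u \<in> V" "p i u = p i a" "p j u = p j b" "u' \<in> V" "p j u' = p j a" "p i u' = p i b"
  shows "spans_intercalate a b \<longleftrightarrow> p k u = p k u'"
proof -
  have "corner = u" "corner' = u'"
    unfolding corner_def corner'_def using assms indices by (simp_all add: cell_eqI)
  then show ?thesis
    by (simp add: spans_intercalate_iff)
qed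

lemma card_common_nbhd_adj_pair: "card (N a \<inter> N b) = n"
proof -
  have "{a, b} \<subseteq> line k (p k a)"
    using a_in b_in same_k by (auto simp: line_def)
  then have "card {a, b} \<le> n"
    using card_mono[OF finite_line] card_line[OF indices(3) p_in[OF a_in indices(3)]] by metis
  then have "2 \<le> n"
    using a_neq_b by simp
  moreover have "finite rest"
    by (simp add: rest_def finite_line)
  ultimately show ?thesis
    unfolding common_nbhd_adj_pair
    using corners_notin_rest corner_neq_corner' card_rest by simp
qed

lemma card_edges_within_common_nbhd:
  "card (edges_within (N a \<inter> N b) adj) = (n - 2) * (n - 3) + (if spans_intercalate a b then 2 else 0)"
proof -
  let ?D = "{(c, d). c \<in> rest \<and> d \<in> rest \<and> c \<noteq> d}"
  let ?X = "{(corner, corner'), (corner', corner)}"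
  have "\<not> adj c d \<and> \<not> adj d c" if "c \<in> rest" "d \<in> {corner, corner'}" for c d
    using that not_adj_rest_corners adj_commute by blast
  then have edges: "edges_within (N a \<inter> N b) adj = ?D \<union> (if adj corner corner' then ?X else {})"
    unfolding common_nbhd_adj_pair edges_within_def
    using adj_rest not_adj_self adj_commute[of corner] by auto
  have "finite rest"
    by (simp add: rest_def finite_line)
  then have "card ?D = (n - 2) * (n - 3)"
    by (simp add: card_off_diagonal card_rest)
  moreover have "?D \<inter> ?X = {}" "card ?X = 2"
    using corners_notin_rest corner_neq_corner' by auto
  moreover have "finite ?D"
    using \<open>finite rest\<close> by (auto intro: finite_subset[of _ "rest \<times> rest"])
  ultimately show ?thesis
    unfolding edges adj_corners_iff spans_intercalate_iff by (simp add: card_Un_disjoint)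
qed

end

context latin_square
begin

lemma latin_square_adj_pairI:
  assumes "adj a b" "p k a = p k b" "i < 3" "j < 3" "k < 3" "i \<noteq> j" "i \<noteq> k" "j \<noteq> k"
  shows "latin_square_adj_pair V C p a b i j k"
  using assms latin_square_axioms
  by (simp add: latin_square_adj_pair_def latin_square_adj_pair_axioms_def)

lemma adj_pairE:
  assumes "adj a b"
  obtains i j k where "latin_square_adj_pair V C p a b i j k"
proof -
  obtain k where k: "k < 3" "p k a = p k b"
    using assms by (elim adjE)
  have "\<exists>i j :: nat. i < 3 \<and> j < 3 \<and> i \<noteq> j \<and> i \<noteq> k \<and> j \<noteq> k"
    using k(1) by presburger
  then obtain i j :: nat where "i < 3" "j < 3" "i \<noteq> j" "i \<noteq> k" "j \<noteq> k"
    by blast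
  with k assms show thesis
    by (intro that latin_square_adj_pairI)
qed

lemma card_common_nbhd_adj: "adj a b \<Longrightarrow> card (N a \<inter> N b) = n"
  by (metis adj_pairE latin_square_adj_pair.card_common_nbhd_adj_pair)

lemma sum_edges_within_common_nbhds:
  assumes "a \<in> V"
  shows "(\<Sum>b\<in>N a. card (edges_within (N a \<inter> N b) adj))
    = (3 * n - 3) * ((n - 2) * (n - 3)) + 2 * card {b \<in> N a. spans_intercalate a b}"
proof -
  have "finite (N a)"
    using finite_V by (simp add: nbhd_def)
  have "(\<Sum>b\<in>N a. card (edges_within (N a \<inter> N b) adj))
      = (\<Sum>b\<in>N a. (n - 2) * (n - 3) + (if spans_intercalate a b then 2 else 0))"
  proof (rule sum.cong[OF refl])
    fix b assume "b \<in> N a"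
    then have "adj a b"
      by (simp add: nbhd_def)
    then show "card (edges_within (N a \<inter> N b) adj)
        = (n - 2) * (n - 3) + (if spans_intercalate a b then 2 else 0)"
      by (metis adj_pairE latin_square_adj_pair.card_edges_within_common_nbhd)
  qed
  also have "\<dots> = card (N a) * ((n - 2) * (n - 3)) + 2 * card {b \<in> N a. spans_intercalate a b}"
    using \<open>finite (N a)\<close> by (simp add: sum.distrib sum.If_cases Int_def)
  finally show ?thesis
    using card_nbhd[OF assms] by simp
qed

lemma strongly_regular:
  assumes "n \<ge> 3"
  shows "strongly_regular V adj (n ^ 2) (3 * n - 3) n 6"
  unfolding strongly_regular_def
  using finite_V card_V card_nbhd ex_non_adj[OF assms] card_common_nbhd_adj
    card_common_nbhd_non_adj by blast

end

text \<open>Right multiplication by the generators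
  \<open>(s, 1)\<close>, \<open>(1, s)\<close>, \<open>(s, s)\<close> of \<open>X\<^sub>G\<close> preserves the second, first and third coordinate,
  respectively.\<close>
definition cayley_coord :: "('a, 'm) monoid_scheme \<Rightarrow> nat \<Rightarrow> 'a \<times> 'a \<Rightarrow> 'a" where
  "cayley_coord G i v =
     (if i = 0 then fst v else if i = 1 then snd v else snd v \<otimes>\<^bsub>G\<^esub> inv\<^bsub>G\<^esub> fst v)"

lemma cayley_coord_simps [simp]:
  "cayley_coord G 0 (x, y) = x"
  "cayley_coord G (Suc 0) (x, y) = y"
  "cayley_coord G 2 (x, y) = y \<otimes>\<^bsub>G\<^esub> inv\<^bsub>G\<^esub> x"
  by (simp_all add: cayley_coord_def)

context group
begin

lemma inv_mult_eq_inv_mult_iff: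
  assumes "x \<in> carrier G" "x' \<in> carrier G" "y \<in> carrier G" "y' \<in> carrier G"
  shows "inv x \<otimes> x' = inv y \<otimes> y' \<longleftrightarrow> y \<otimes> inv x = y' \<otimes> inv x'"
proof -
  have "inv x \<otimes> x' = inv y \<otimes> y' \<longleftrightarrow> y' = y \<otimes> (inv x \<otimes> x')"
    using inv_solve_left[of "inv x \<otimes> x'" y y'] assms by auto
  also have "\<dots> \<longleftrightarrow> y' = (y \<otimes> inv x) \<otimes> x'"
    using assms by (simp add: m_assoc)
  also have "\<dots> \<longleftrightarrow> y \<otimes> inv x = y' \<otimes> inv x'"
    using inv_solve_right[of "y \<otimes> inv x" y' x'] assms by auto
  finally show ?thesis .
qed

lemma mult_inv_mult_cancel_right:
  assumes "x \<in> carrier G" "y \<in> carrier G" "t \<in> carrier G"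
  shows "(y \<otimes> t) \<otimes> inv (x \<otimes> t) = y \<otimes> inv x"
  using assms by (simp add: inv_mult_group m_assoc) (simp flip: m_assoc)

lemma ord_eq_2_iff:
  assumes t: "t \<in> carrier G"
  shows "ord t = 2 \<longleftrightarrow> t \<noteq> \<one> \<and> inv t = t"
proof -
  have "inv t = t \<longleftrightarrow> t \<otimes> t = \<one>"
    using t inv_equality[of t t] r_inv[OF t] by metis
  also have "\<dots> \<longleftrightarrow> t [^] (2::nat) = \<one>"
    using t by (simp add: numeral_2_eq_2)
  also have "\<dots> \<longleftrightarrow> ord t dvd 2"
    by (rule pow_eq_id[OF t])
  also have "\<dots> \<longleftrightarrow> ord t = 1 \<or> ord t = 2"
    using dvd_imp_le[of "ord t" 2] by (cases "ord t") (auto simp: le_Suc_eq numeral_2_eq_2)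
  finally show ?thesis
    using ord_eq_1[OF t] by auto
qed

lemma latin_square_cayley:
  assumes "finite (carrier G)"
  shows "latin_square (carrier G \<times> carrier G) (carrier G) (cayley_coord G)"
proof
  show "\<And>v i. v \<in> carrier G \<times> carrier G \<Longrightarrow> i < 3 \<Longrightarrow> cayley_coord G i v \<in> carrier G"
    by (auto simp: cayley_coord_def)
  show "v = w" if vw: "v \<in> carrier G \<times> carrier G" "w \<in> carrier G \<times> carrier G"
    and ij: "i < 3" "j < 3" "i \<noteq> j"
    and eq: "cayley_coord G i v = cayley_coord G i w" "cayley_coord G j v = cayley_coord G j w"
    for v w i j
  proof -
    obtain x y x' y' where v: "v = (x, y)" and w: "w = (x', y')"
      and c: "x \<in> carrier G" "y \<in> carrier G" "x' \<in> carrier G" "y' \<in> carrier G"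
      using vw by auto
    have "y \<otimes> inv x = y' \<otimes> inv x \<Longrightarrow> y = y'" "y \<otimes> inv x = y \<otimes> inv x' \<Longrightarrow> x = x'"
      using c inv_inj[THEN inj_onD, of x x'] by simp_all
    then show ?thesis
      using less_3_cases[OF ij(1)] less_3_cases[OF ij(2)] ij(3) eq by (auto simp: v w)
  qed
  show "\<exists>v\<in>carrier G \<times> carrier G. cayley_coord G i v = a \<and> cayley_coord G j v = b"
    if ab: "a \<in> carrier G" "b \<in> carrier G" and ij: "i < 3" "j < 3" "i \<noteq> j" for a b i j
  proof -
    have w: "(b \<otimes> a) \<otimes> inv a = b" "(a \<otimes> b) \<otimes> inv b = a"
      "a \<otimes> inv (inv b \<otimes> a) = b" "b \<otimes> inv (inv a \<otimes> b) = a"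
      using ab by (simp_all add: m_assoc inv_mult_group) (simp_all flip: m_assoc)
    from less_3_cases[OF ij(1)] less_3_cases[OF ij(2)] ij(3) show ?thesis
    proof (elim disjE)
      assume "i = 0" "j = 1"
      then show ?thesis using ab by (intro bexI[of _ "(a, b)"]) auto
    next
      assume "i = 1" "j = 0"
      then show ?thesis using ab by (intro bexI[of _ "(b, a)"]) auto
    next
      assume "i = 0" "j = 2"
      then show ?thesis using ab w by (intro bexI[of _ "(a, b \<otimes> a)"]) auto
    next
      assume "i = 2" "j = 0"
      then show ?thesis using ab w by (intro bexI[of _ "(b, a \<otimes> b)"]) auto
    next
      assume "i = 1" "j = 2"
      then show ?thesis using ab w by (intro bexI[of _ "(inv b \<otimes> a, a)"]) auto
    next
      assume "i = 2" "j = 1"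
      then show ?thesis using ab w by (intro bexI[of _ "(inv a \<otimes> b, b)"]) auto
    qed auto
  qed
qed (rule assms)

end

locale finite_group = group +
  assumes finite_carrier: "finite (carrier G)"

sublocale finite_group \<subseteq> L: latin_square "carrier G \<times> carrier G" "carrier G" "cayley_coord G"
  by (rule latin_square_cayley[OF finite_carrier])

context finite_group
begin

lemma XG_adj_eq: "XG_adj G = L.adj"
proof (intro ext)
  fix v w :: "'a \<times> 'a"
  show "XG_adj G v w = L.adj v w"
  proof (cases "v \<in> carrier G \<times> carrier G \<and> w \<in> carrier G \<times> carrier G")
    case False
    then show ?thesis
      unfolding XG_adj_def cayley_adj_def L.adj_def by auto
  next
    case True
    then obtain x y x' y' where v: "v = (x, y)" and w: "w = (x', y')"
      and c: "x \<in> carrier G" "y \<in> carrier G" "x' \<in> carrier G" "y' \<in> carrier G"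
      by auto
    have A: "inv x \<otimes> x' = \<one> \<longleftrightarrow> x' = x" and B: "inv y \<otimes> y' = \<one> \<longleftrightarrow> y' = y"
      using c inv_solve_left'[of \<one>] by simp_all
    have D: "inv x \<otimes> x' = inv y \<otimes> y' \<longleftrightarrow> y \<otimes> inv x = y' \<otimes> inv x'"
      using c by (simp add: inv_mult_eq_inv_mult_iff)
    have "y \<otimes> inv x = y' \<otimes> inv x' \<Longrightarrow> x = x' \<Longrightarrow> y = y'"
      "y \<otimes> inv x = y' \<otimes> inv x' \<Longrightarrow> y = y' \<Longrightarrow> x = x'"
      using c inv_inj[THEN inj_onD, of x x'] by simp_all
    moreover have "XG_adj G v w \<longleftrightarrow> (inv x \<otimes> x', inv y \<otimes> y') \<in> XG_conn G"
      unfolding XG_adj_def cayley_adj_def v w using c inv_DirProd[OF is_group is_group] by simp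
    ultimately show ?thesis
      unfolding XG_conn_def L.adj_def ex_less_3 v w using A B D c by auto
  qed
qed

lemma adj_steps:
  assumes "x \<in> carrier G" "y \<in> carrier G" "t \<in> carrier G" "t \<noteq> \<one>"
  shows "L.adj (x, y) (x, y \<otimes> t)" "L.adj (x, y) (x \<otimes> t, y)" "L.adj (x, y) (x \<otimes> t, y \<otimes> t)"
proof -
  have "(y \<otimes> t) \<otimes> inv (x \<otimes> t) = y \<otimes> inv x"
    using assms(1-3) by (rule mult_inv_mult_cancel_right)
  then show "L.adj (x, y) (x, y \<otimes> t)" "L.adj (x, y) (x \<otimes> t, y)" "L.adj (x, y) (x \<otimes> t, y \<otimes> t)"
    using assms unfolding L.adj_def ex_less_3 by auto
qed

lemma spans_intercalate_steps:
  assumes x: "x \<in> carrier G" and y: "y \<in> carrier G" and t: "t \<in> carrier G" "t \<noteq> \<one>"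
  shows "L.spans_intercalate (x, y) (x, y \<otimes> t) \<longleftrightarrow> inv t = t"
    and "L.spans_intercalate (x, y) (x \<otimes> t, y) \<longleftrightarrow> inv t = t"
    and "L.spans_intercalate (x, y) (x \<otimes> t, y \<otimes> t) \<longleftrightarrow> inv t = t"
proof -
  have shift: "(y \<otimes> t) \<otimes> inv (x \<otimes> t) = y \<otimes> inv x"
    using x y t(1) by (rule mult_inv_mult_cancel_right)
  have shift': "y \<otimes> inv (x \<otimes> inv t) = (y \<otimes> t) \<otimes> inv x" "(y \<otimes> inv t) \<otimes> inv x = y \<otimes> inv (x \<otimes> t)"
    using x y t by (simp_all add: inv_mult_group m_assoc)
  interpret P0: latin_square_adj_pair "carrier G \<times> carrier G" "carrier G" "cayley_coord G"
    "(x, y)" "(x, y \<otimes> t)" 1 2 0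
    by (rule L.latin_square_adj_pairI) (use adj_steps[OF x y t] x y in simp_all)
  have "L.spans_intercalate (x, y) (x, y \<otimes> t) \<longleftrightarrow> x \<otimes> inv t = x \<otimes> t"
    using P0.spans_intercalate_iff_completions[of "(x \<otimes> inv t, y)" "(x \<otimes> t, y \<otimes> t)"]
      x y t shift shift' by simp
  then show "L.spans_intercalate (x, y) (x, y \<otimes> t) \<longleftrightarrow> inv t = t"
    using x t by simp
  interpret P1: latin_square_adj_pair "carrier G \<times> carrier G" "carrier G" "cayley_coord G"
    "(x, y)" "(x \<otimes> t, y)" 0 2 1
    by (rule L.latin_square_adj_pairI) (use adj_steps[OF x y t] x y in simp_all)
  have "L.spans_intercalate (x, y) (x \<otimes> t, y) \<longleftrightarrow> y \<otimes> inv t = y \<otimes> t"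
    using P1.spans_intercalate_iff_completions[of "(x, y \<otimes> inv t)" "(x \<otimes> t, y \<otimes> t)"]
      x y t shift shift' by simp
  then show "L.spans_intercalate (x, y) (x \<otimes> t, y) \<longleftrightarrow> inv t = t"
    using y t by simp
  interpret P2: latin_square_adj_pair "carrier G \<times> carrier G" "carrier G" "cayley_coord G"
    "(x, y)" "(x \<otimes> t, y \<otimes> t)" 0 1 2
    by (rule L.latin_square_adj_pairI) (use adj_steps[OF x y t] x y shift in simp_all)
  have "L.spans_intercalate (x, y) (x \<otimes> t, y \<otimes> t)
      \<longleftrightarrow> (y \<otimes> t) \<otimes> inv x = (y \<otimes> inv t) \<otimes> inv x"
    using P2.spans_intercalate_iff_completions[of "(x, y \<otimes> t)" "(x \<otimes> t, y)"]
      x y t shift' by simp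
  then show "L.spans_intercalate (x, y) (x \<otimes> t, y \<otimes> t) \<longleftrightarrow> inv t = t"
    using x y t by (auto simp: m_assoc)
qed

lemma card_spans_intercalate_nbhd:
  assumes "a \<in> carrier G \<times> carrier G"
  shows "card {b \<in> L.N a. L.spans_intercalate a b} = 3 * num_inv2 G"
proof -
  obtain x y where a: "a = (x, y)" and x: "x \<in> carrier G" and y: "y \<in> carrier G"
    using assms by auto
  define S where "S = carrier G - {\<one>}"
  define moves where "moves A = (\<lambda>t. (x, y \<otimes> t)) ` A \<union> (\<lambda>t. (x \<otimes> t, y)) ` A
    \<union> (\<lambda>t. (x \<otimes> t, y \<otimes> t)) ` A" for A
  have card_moves: "card (moves A) = 3 * card A" if "A \<subseteq> S" for A
  proof -
    have "A \<subseteq> carrier G" "\<one> \<notin> A"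
      using that by (auto simp: S_def)
    then show ?thesis
      unfolding moves_def using x y finite_subset[OF _ finite_carrier]
      by (intro card_image_Un3) (auto simp: inj_on_def subset_eq)
  qed
  have "moves S \<subseteq> L.N a"
    using adj_steps[OF x y] L.adj_def by (auto simp: moves_def S_def a nbhd_def)
  moreover have "card (moves S) = card (L.N a)"
    using card_moves[of S] L.card_nbhd[OF assms] finite_carrier
    by (simp add: S_def card_Diff_singleton)
  ultimately have nbhd: "L.N a = moves S"
    using L.finite_V by (intro card_subset_eq[symmetric]) (auto simp: nbhd_def)
  define I where "I = {t \<in> S. inv t = t}"
  have "{b \<in> L.N a. L.spans_intercalate a b} = moves I"
    unfolding nbhd using spans_intercalate_steps[OF x y] by (auto simp: moves_def I_def S_def a)
  moreover have "I = {t \<in> carrier G. ord t = 2}"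
    using ord_eq_2_iff by (auto simp: I_def S_def)
  moreover have "card (moves I) = 3 * card I"
    by (rule card_moves) (auto simp: I_def)
  ultimately show ?thesis
    by (simp add: num_inv2_def)
qed

lemma ordered_K4_count_XG:
  "ordered_K4_count (XG_vert G) (XG_adj G) =
    card (carrier G) ^ 2 * ((3 * card (carrier G) - 3) * ((card (carrier G) - 2) * (card (carrier G) - 3))
      + 6 * num_inv2 G)"
proof -
  have "ordered_K4_count (XG_vert G) (XG_adj G)
      = (\<Sum>a\<in>carrier G \<times> carrier G. (3 * card (carrier G) - 3) * ((card (carrier G) - 2)
          * (card (carrier G) - 3)) + 6 * num_inv2 G)"
    unfolding ordered_K4_count_def XG_vert_def XG_adj_eq carrier_DirProd
    by (intro sum.cong refl) (simp add: L.sum_edges_within_common_nbhds card_spans_intercalate_nbhd)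
  then show ?thesis
    using L.card_V by simp
qed

end

lemma finite_groupI: "group G \<Longrightarrow> finite (carrier G) \<Longrightarrow> finite_group G"
  by (simp add: finite_group_def finite_group_axioms_def)

theorem mainTheorem3:
  fixes G :: "('a, 'm) monoid_scheme" and n :: nat
  assumes "group G" and "finite (carrier G)" and "card (carrier G) = n" and "n \<ge> 3"
  shows "strongly_regular (XG_vert G) (XG_adj G) (n ^ 2) (3 * n - 3) n 6
     \<and> (\<forall>(H :: ('b, 'c) monoid_scheme). group H \<and> finite (carrier H) \<and> card (carrier H) = n
          \<and> graph_iso (XG_vert G) (XG_adj G) (XG_vert H) (XG_adj H)
          \<longrightarrow> num_inv2 G = num_inv2 H)"
proof -
  interpret G: finite_group G
    using assms(1,2) by (rule finite_groupI)
  have "strongly_regular (XG_vert G) (XG_adj G) (n ^ 2) (3 * n - 3) n 6"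
    using G.L.strongly_regular assms(3,4) by (simp add: XG_vert_def G.XG_adj_eq)
  moreover have "num_inv2 G = num_inv2 H"
    if H: "group H" "finite (carrier H)" "card (carrier H) = n"
      and iso: "graph_iso (XG_vert G) (XG_adj G) (XG_vert H) (XG_adj H)"
    for H :: "('b, 'c) monoid_scheme"
  proof -
    interpret H: finite_group H
      using H(1,2) by (rule finite_groupI)
    have "n ^ 2 * ((3 * n - 3) * ((n - 2) * (n - 3)) + 6 * num_inv2 G)
        = n ^ 2 * ((3 * n - 3) * ((n - 2) * (n - 3)) + 6 * num_inv2 H)"
      using ordered_K4_count_graph_iso[OF iso] G.ordered_K4_count_XG H.ordered_K4_count_XG
        assms(3) H(3) by simp
    then show ?thesis
      using assms(4) by simp
  qed
  ultimately show ?thesis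
    by blast
qed

end
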